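(* There exists a constant $C>0$, depending only on $d$, $C_{\rm L}$, $\rho$ and $f$ (not on $m$ or $\theta$), such that for every $m\ge1$, every parameter $\theta=(a_k,w_k)_{k=1}^m$ with $q_{\max}(\theta)\le1$, and every $k\in[m]$, $$|f_k(\theta)|\le C\big(q_{\max}(\theta)^3+m\,q_{\max}(\theta)^5\big),\qquad \|g_k(\theta)\|_2\le C\big(q_{\max}(\theta)^3+m\,q_{\max}(\theta)^5\big).$$
   Context: Fix $d\ge1$. For $\theta=(a_k,w_k)_{k=1}^m$, $a_k\in\mathbb R$, $w_k=(w_k^1,\dots,w_k^d)^T\in\mathbb R^d$, let $f_\theta(x)=\sum_{k=1}^m a_k\sigma(w_k^Tx)$ and $R(\theta)=\tfrac12\int_{\mathbb R^d}(f_\theta(x)-f(x))^2\rho(x)dx$, where $\rho$ is a compactly supported probability density on $\mathbb R^d$ with $\int x_i^2\rho=1$ and $\int x_ix_j\rho=0$ for $i\ne j$; $f$ is bounded on $\mathrm{supp}\,\rho$ with $\int f(x)x\rho(x)dx=e_1=(1,0,\dots,0)^T$; $\sigma$ is three times differentiable with $\sigma(0)=0$, $\sigma'(0)=1$, $\sigma''(0)=0$, $|\sigma'''(z)|\le C_{\rm L}$ for all $z$. Set $q_{\max}(\theta)=\max_{k\in[m],i\in[d]}\{|a_k|,|w_k^i|\}$ and define the higher-order terms $$f_k(\theta)=-\frac{\partial R}{\partial a_k}(\theta)-\Big(w_k^1-\sum_{i=1}^d\Big(\sum_{l=1}^m a_lw_l^i\Big)w_k^i\Big),\qquad g_k(\theta)=-\nabla_{w_k}R(\theta)-a_k\Big(e_1-\sum_{l=1}^m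 a_lw_l\Big)\in\mathbb R^d.$$ *)

theory Defs
  imports "HOL-Analysis.Analysis"
begin

definition fnet :: "(real \<Rightarrow> real) \<Rightarrow> nat \<Rightarrow> (nat \<Rightarrow> real) \<Rightarrow> (nat \<Rightarrow> real^'n) \<Rightarrow> real^'n \<Rightarrow> real" where
  "fnet \<sigma> m a w x = (\<Sum>l<m. a l * \<sigma> (w l \<bullet> x))"

definition risk :: "(real \<Rightarrow> real) \<Rightarrow> (real^'n \<Rightarrow> real) \<Rightarrow> (real^'n \<Rightarrow> real) \<Rightarrow> nat \<Rightarrow> (nat \<Rightarrow> real) \<Rightarrow> (nat \<Rightarrow> real^'n) \<Rightarrow> real" where
  "risk \<sigma> \<rho> f m a w = 1/2 * integral\<^sup>L lborel (\<lambda>x. (fnet \<sigma> m a w x - f x)\<^sup>2 * \<rho> x)"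

definition qmax :: "nat \<Rightarrow> (nat \<Rightarrow> real) \<Rightarrow> (nat \<Rightarrow> real^'n) \<Rightarrow> real" where
  "qmax m a w = Max (\<Union>k\<in>{..<m}. insert \<bar>a k\<bar> (range (\<lambda>i. \<bar>w k $ i\<bar>)))"

definition dR_a :: "(real \<Rightarrow> real) \<Rightarrow> (real^'n \<Rightarrow> real) \<Rightarrow> (real^'n \<Rightarrow> real) \<Rightarrow> nat \<Rightarrow> (nat \<Rightarrow> real) \<Rightarrow> (nat \<Rightarrow> real^'n) \<Rightarrow> nat \<Rightarrow> real" where
  "dR_a \<sigma> \<rho> f m a w k = deriv (\<lambda>t. risk \<sigma> \<rho> f m (a(k := a k + t)) w) 0"

definition dR_w :: "(real \<Rightarrow> real) \<Rightarrow> (real^'n \<Rightarrow> real) \<Rightarrow> (real^'n \<Rightarrow> real) \<Rightarrow> nat \<Rightarrow> (nat \<Rightarrow> real) \<Rightarrow> (nat \<Rightarrow> real^'n) \<Rightarrow> nat \<Rightarrow> real^'n" where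
  "dR_w \<sigma> \<rho> f m a w k = (\<chi> i. deriv (\<lambda>t. risk \<sigma> \<rho> f m a (w(k := w k + t *\<^sub>R axis i 1))) 0)"

text \<open>Higher-order terms; j1 is the distinguished coordinate playing the role of index 1 (e_1 = axis j1 1).\<close>
definition hot_f :: "(real \<Rightarrow> real) \<Rightarrow> (real^'n \<Rightarrow> real) \<Rightarrow> (real^'n \<Rightarrow> real) \<Rightarrow> 'n \<Rightarrow> nat \<Rightarrow> (nat \<Rightarrow> real) \<Rightarrow> (nat \<Rightarrow> real^'n) \<Rightarrow> nat \<Rightarrow> real" where
  "hot_f \<sigma> \<rho> f j1 m a w k = - dR_a \<sigma> \<rho> f m a w k
     - (w k $ j1 - (\<Sum>i\<in>UNIV. (\<Sum>l<m. a l * w l $ i) * w k $ i))"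

definition hot_g :: "(real \<Rightarrow> real) \<Rightarrow> (real^'n \<Rightarrow> real) \<Rightarrow> (real^'n \<Rightarrow> real) \<Rightarrow> 'n \<Rightarrow> nat \<Rightarrow> (nat \<Rightarrow> real) \<Rightarrow> (nat \<Rightarrow> real^'n) \<Rightarrow> nat \<Rightarrow> real^'n" where
  "hot_g \<sigma> \<rho> f j1 m a w k = - dR_w \<sigma> \<rho> f m a w k
     - a k *\<^sub>R (axis j1 1 - (\<Sum>l<m. a l *\<^sub>R w l))"

end

theory Submission
  imports Defs
begin

text \<open>
  Differentiating under the integral sign, which the compact support of rho justifies, gives
  dR/da_k = int (f_theta - f) sigma(w_k.x) rho and grad_{w_k} R = a_k int (f_theta - f) sigma'(w_k.x) x rho.
  The moment conditions int x x^T rho = I and int f x rho = e_1 rewrite the linear parts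
  w_k^1 - sum_i (sum_l a_l w_l^i) w_k^i and a_k (e_1 - sum_l a_l w_l) as the same integrals for the
  linearised network, so f_k and g_k become integrals of f (sigma(u_k) - u_k),
  a_l (sigma(u_l) sigma(u_k) - u_l u_k), a_k f x (sigma'(u_k) - 1) and a_k a_l (sigma(u_l) sigma'(u_k) - u_l) x
  with u_l = w_l.x = O(q) on the support.  As sigma(0) = sigma''(0) = 0, sigma'(0) = 1 and
  |sigma'''| <= C_L, Taylor expansion makes these O(q^3), O(q^5), O(q^3) and O(q^5), and summing over
  the m neurons gives the bound C (q^3 + m q^5).
\<close>

lemma abs_diff_le_of_deriv_bound:
  fixes g g' :: "real \<Rightarrow> real"
  assumes "\<And>z. (g has_real_derivative g' z) (at z)"
    and "\<And>z. min a b \<le> z \<Longrightarrow> z \<le> max a b \<Longrightarrow> \<bar>g' z\<bar> \<le> M"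
  shows "\<bar>g b - g a\<bar> \<le> M * \<bar>b - a\<bar>"
  using field_differentiable_bound[of "{min a b..max a b}" g g' M b a] assms
  by (auto intro: has_field_derivative_at_within)

lemma bounded_mult_comp:
  fixes f g :: "'a \<Rightarrow> 'b::real_normed_algebra"
  assumes "bounded (f ` S)" "bounded (g ` S)"
  shows "bounded ((\<lambda>x. f x * g x) ` S)"
proof -
  obtain B C where "\<And>x. x \<in> S \<Longrightarrow> norm (f x) \<le> B" "\<And>x. x \<in> S \<Longrightarrow> norm (g x) \<le> C"
    using assms by (auto simp: bounded_iff)
  then have "\<And>x. x \<in> S \<Longrightarrow> norm (f x * g x) \<le> B * C"
    by (meson norm_ge_zero norm_mult_ineq mult_mono order_trans)
  then show ?thesis by (auto simp: bounded_iff)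
qed

lemma has_real_derivative_at_0_of_quadratic_remainder:
  fixes h :: "real \<Rightarrow> real"
  assumes "\<And>t. \<bar>t\<bar> \<le> 1 \<Longrightarrow> \<bar>h t - h 0 - t * D\<bar> \<le> C * t\<^sup>2"
  shows "(h has_real_derivative D) (at 0)"
  unfolding has_field_derivative_iff
proof (rule LIM_zero_cancel, rule Lim_null_comparison)
  show "\<forall>\<^sub>F t in at 0. norm ((h t - h 0) / (t - 0) - D) \<le> \<bar>C\<bar> * \<bar>t\<bar>"
    unfolding eventually_at
  proof (intro exI[of _ 1] conjI ballI impI)
    fix t :: real assume t: "t \<noteq> 0 \<and> dist t 0 < 1"
    have "C * t\<^sup>2 \<le> \<bar>C\<bar> * \<bar>t\<bar> * \<bar>t\<bar>"
      by (simp add: mult.assoc mult_right_mono power2_eq_square)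
    then have "\<bar>h t - h 0 - t * D\<bar> \<le> \<bar>C\<bar> * \<bar>t\<bar> * \<bar>t\<bar>"
      using assms[of t] t by simp
    moreover have "(h t - h 0) / (t - 0) - D = (h t - h 0 - t * D) / t"
      using t by (simp add: field_simps)
    ultimately show "norm ((h t - h 0) / (t - 0) - D) \<le> \<bar>C\<bar> * \<bar>t\<bar>"
      using t by (simp add: divide_le_eq)
  qed simp
qed (auto intro!: tendsto_eq_intros)

lemma deriv_integral_at_0:
  fixes F :: "real \<Rightarrow> 'a \<Rightarrow> real"
  assumes F: "\<And>t. \<bar>t\<bar> \<le> 1 \<Longrightarrow> integrable M (F t)"
    and D: "integrable M D" and g: "integrable M g"
    and remainder: "\<And>t x. \<bar>t\<bar> \<le> 1 \<Longrightarrow> \<bar>F t x - F 0 x - t * D x\<bar> \<le> K * t\<^sup>2 * g x"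
  shows "deriv (\<lambda>t. integral\<^sup>L M (F t)) 0 = integral\<^sup>L M D"
proof (rule DERIV_imp_deriv, rule has_real_derivative_at_0_of_quadratic_remainder)
  fix t :: real assume t: "\<bar>t\<bar> \<le> 1"
  have "integral\<^sup>L M (F t) - integral\<^sup>L M (F 0) - t * integral\<^sup>L M D
      = integral\<^sup>L M (\<lambda>x. F t x - F 0 x - t * D x)"
    using F[OF t] F[of 0] D by simp
  also have "\<bar>\<dots>\<bar> \<le> integral\<^sup>L M (\<lambda>x. \<bar>F t x - F 0 x - t * D x\<bar>)"
    by (rule integral_abs_bound)
  also have "\<dots> \<le> integral\<^sup>L M (\<lambda>x. K * t\<^sup>2 * g x)"
    using F[OF t] F[of 0] D g remainder[OF t] by (intro integral_mono) simp_all
  finally show "\<bar>integral\<^sup>L M (F t) - integral\<^sup>L M (F 0) - t * integral\<^sup>L M D\<bar>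
      \<le> (K * integral\<^sup>L M g) * t\<^sup>2"
    by (simp add: mult_ac)
qed

lemma abs_mult_le_mult:
  fixes x y :: "'a::linordered_idom"
  assumes "\<bar>x\<bar> \<le> a" "\<bar>y\<bar> \<le> b"
  shows "\<bar>x * y\<bar> \<le> a * b"
  unfolding abs_mult using assms by (intro mult_mono) auto

lemma abs_add_le_add:
  fixes x y :: "'a::linordered_idom"
  shows "\<bar>x\<bar> \<le> a \<Longrightarrow> \<bar>y\<bar> \<le> b \<Longrightarrow> \<bar>x + y\<bar> \<le> a + b"
  using abs_triangle_ineq[of x y] by linarith

lemma abs_diff_le_add:
  fixes x y :: "'a::linordered_idom"
  shows "\<bar>x\<bar> \<le> a \<Longrightarrow> \<bar>y\<bar> \<le> b \<Longrightarrow> \<bar>x - y\<bar> \<le> a + b"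
  using abs_triangle_ineq4[of x y] by linarith

lemma abs_sum_lessThan_le:
  fixes g :: "nat \<Rightarrow> real"
  shows "(\<And>l. l < m \<Longrightarrow> \<bar>g l\<bar> \<le> M) \<Longrightarrow> \<bar>\<Sum>l<m. g l\<bar> \<le> real m * M"
  using sum_norm_bound[of "{..<m}" g M] by simp

lemma mult_add_mult_le:
  fixes \<alpha> \<beta> C X Y :: real
  shows "\<alpha> \<le> C \<Longrightarrow> \<beta> \<le> C \<Longrightarrow> 0 \<le> X \<Longrightarrow> 0 \<le> Y \<Longrightarrow> \<alpha> * X + \<beta> * Y \<le> C * (X + Y)"
  by (simp add: distrib_left add_mono mult_right_mono)

locale activation =
  fixes \<sigma> \<sigma>1 \<sigma>2 \<sigma>3 :: "real \<Rightarrow> real" and CL :: real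
  assumes s1: "\<And>z. (\<sigma> has_real_derivative \<sigma>1 z) (at z)"
    and s2: "\<And>z. (\<sigma>1 has_real_derivative \<sigma>2 z) (at z)"
    and s3: "\<And>z. (\<sigma>2 has_real_derivative \<sigma>3 z) (at z)"
    and s0: "\<sigma> 0 = 0" "\<sigma>1 0 = 1" "\<sigma>2 0 = 0"
    and sL: "\<And>z. \<bar>\<sigma>3 z\<bar> \<le> CL"
begin

lemma CL_nonneg: "0 \<le> CL"
  using sL[of 0] by linarith

lemma abs_sigma2_le: "\<bar>\<sigma>2 z\<bar> \<le> CL * \<bar>z\<bar>"
  using abs_diff_le_of_deriv_bound[of \<sigma>2 \<sigma>3 0 z CL, OF s3 sL] s0 by simp

lemma abs_sigma1_diff_le: "\<bar>\<sigma>1 z - \<sigma>1 y\<bar> \<le> CL * max \<bar>z\<bar> \<bar>y\<bar> * \<bar>z - y\<bar>"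
proof (rule abs_diff_le_of_deriv_bound[OF s2])
  fix t assume "min y z \<le> t" "t \<le> max y z"
  then have "\<bar>t\<bar> \<le> max \<bar>z\<bar> \<bar>y\<bar>" by auto
  then show "\<bar>\<sigma>2 t\<bar> \<le> CL * max \<bar>z\<bar> \<bar>y\<bar>"
    using abs_sigma2_le[of t] CL_nonneg by (meson mult_left_mono order_trans)
qed

lemma abs_sigma1_sub_one_le: "\<bar>\<sigma>1 z - 1\<bar> \<le> CL * z\<^sup>2"
  using abs_sigma1_diff_le[of z 0] s0(2) by (simp add: power2_eq_square mult.assoc)

lemma abs_sigma_sub_id_le: "\<bar>\<sigma> z - z\<bar> \<le> CL * \<bar>z\<bar> ^ 3"
proof -
  have "\<bar>(\<sigma> z - z) - (\<sigma> 0 - 0)\<bar> \<le> CL * z\<^sup>2 * \<bar>z - 0\<bar>"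
  proof (rule abs_diff_le_of_deriv_bound)
    show "((\<lambda>t. \<sigma> t - t) has_real_derivative \<sigma>1 t - 1) (at t)" for t
      by (auto intro!: derivative_eq_intros s1)
    fix t assume "min 0 z \<le> t" "t \<le> max 0 z"
    then have "t\<^sup>2 \<le> z\<^sup>2" by (intro abs_le_square_iff[THEN iffD1]) auto
    then show "\<bar>\<sigma>1 t - 1\<bar> \<le> CL * z\<^sup>2"
      using abs_sigma1_sub_one_le[of t] CL_nonneg by (meson mult_left_mono order_trans)
  qed
  then show ?thesis
    using s0(1) by (simp add: power2_eq_square power3_eq_cube abs_mult mult.assoc)
qed

lemma has_real_derivative_sigma_shift: "((\<lambda>t. \<sigma> (u + t)) has_real_derivative \<sigma>1 (u + t)) (at t)"
  using DERIV_chain2[OF s1 DERIV_add[OF DERIV_const DERIV_ident]] by simp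

lemma abs_sigma_remainder_le:
  assumes "\<bar>u\<bar> \<le> U" "\<bar>h\<bar> \<le> H"
  shows "\<bar>\<sigma> (u + h) - \<sigma> u - h * \<sigma>1 u\<bar> \<le> CL * (U + H) * h\<^sup>2"
proof -
  have "\<bar>(\<sigma> (u + h) - h * \<sigma>1 u) - (\<sigma> (u + 0) - 0 * \<sigma>1 u)\<bar> \<le> CL * (U + H) * \<bar>h\<bar> * \<bar>h - 0\<bar>"
  proof (rule abs_diff_le_of_deriv_bound)
    show "((\<lambda>t. \<sigma> (u + t) - t * \<sigma>1 u) has_real_derivative \<sigma>1 (u + t) - \<sigma>1 u) (at t)" for t
      using has_real_derivative_sigma_shift by (auto intro!: derivative_eq_intros)
    fix t assume "min 0 h \<le> t" "t \<le> max 0 h"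
    then have t: "\<bar>t\<bar> \<le> \<bar>h\<bar>" by auto
    have "\<bar>\<sigma>1 (u + t) - \<sigma>1 u\<bar> \<le> CL * max \<bar>u + t\<bar> \<bar>u\<bar> * \<bar>t\<bar>"
      using abs_sigma1_diff_le[of "u + t" u] by simp
    also have "\<dots> \<le> CL * (U + H) * \<bar>h\<bar>"
      using assms t CL_nonneg by (intro mult_mono mult_left_mono) auto
    finally show "\<bar>\<sigma>1 (u + t) - \<sigma>1 u\<bar> \<le> CL * (U + H) * \<bar>h\<bar>" .
  qed
  then show ?thesis by (simp add: power2_eq_square mult.assoc)
qed

lemma abs_sigma_increment_le:
  assumes "\<bar>u\<bar> \<le> U" "\<bar>h\<bar> \<le> H"
  shows "\<bar>\<sigma> (u + h) - \<sigma> u\<bar> \<le> (1 + CL * (U + H)\<^sup>2) * \<bar>h\<bar>"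
proof -
  have "\<bar>\<sigma> (u + h) - \<sigma> (u + 0)\<bar> \<le> (1 + CL * (U + H)\<^sup>2) * \<bar>h - 0\<bar>"
  proof (rule abs_diff_le_of_deriv_bound[OF has_real_derivative_sigma_shift])
    fix t assume "min 0 h \<le> t" "t \<le> max 0 h"
    then have "(u + t)\<^sup>2 \<le> (U + H)\<^sup>2"
      using assms by (intro abs_le_square_iff[THEN iffD1]) auto
    then have "CL * (u + t)\<^sup>2 \<le> CL * (U + H)\<^sup>2"
      using CL_nonneg by (rule mult_left_mono)
    then show "\<bar>\<sigma>1 (u + t)\<bar> \<le> 1 + CL * (U + H)\<^sup>2"
      using abs_sigma1_sub_one_le[of "u + t"] by linarith
  qed
  then show ?thesis by simp
qed

lemma abs_sigma_scaled_increment_le: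
  assumes u: "\<bar>u\<bar> \<le> U" and s: "\<bar>s\<bar> \<le> R" and t: "\<bar>t\<bar> \<le> 1"
  shows "\<bar>\<sigma> (u + t * s) - \<sigma> u - t * s * \<sigma>1 u\<bar> \<le> CL * (U + R) * R\<^sup>2 * t\<^sup>2"
    and "\<bar>\<sigma> (u + t * s) - \<sigma> u\<bar> \<le> (1 + CL * (U + R)\<^sup>2) * R * \<bar>t\<bar>"
proof -
  have ts: "\<bar>t * s\<bar> \<le> R * \<bar>t\<bar>"
    using mult_left_mono[OF s abs_ge_zero[of t]] by (simp add: abs_mult mult.commute)
  moreover have "R * \<bar>t\<bar> \<le> R"
    using s t by (intro mult_left_le) auto
  ultimately have ts_R: "\<bar>t * s\<bar> \<le> R" by linarith
  have "(t * s)\<^sup>2 \<le> R\<^sup>2 * t\<^sup>2"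
    using power_mono[OF ts abs_ge_zero, of 2] by (simp add: power_mult_distrib)
  moreover have "0 \<le> CL * (U + R)"
    using CL_nonneg u s by simp
  ultimately show "\<bar>\<sigma> (u + t * s) - \<sigma> u - t * s * \<sigma>1 u\<bar> \<le> CL * (U + R) * R\<^sup>2 * t\<^sup>2"
    using abs_sigma_remainder_le[OF u ts_R] mult_left_mono by (fastforce simp: mult.assoc)
  have "0 \<le> 1 + CL * (U + R)\<^sup>2"
    using CL_nonneg by simp
  then show "\<bar>\<sigma> (u + t * s) - \<sigma> u\<bar> \<le> (1 + CL * (U + R)\<^sup>2) * R * \<bar>t\<bar>"
    using abs_sigma_increment_le[OF u ts_R] mult_left_mono[OF ts] by (fastforce simp: mult.assoc)
qed

lemma abs_sigma_sub_id_le_cube: "\<bar>u\<bar> \<le> r \<Longrightarrow> \<bar>\<sigma> u - u\<bar> \<le> CL * r ^ 3"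
  using abs_sigma_sub_id_le[of u] mult_left_mono[OF power_mono CL_nonneg, of "\<bar>u\<bar>" r 3] by simp

lemma abs_sigma1_sub_one_le_sq: "\<bar>u\<bar> \<le> r \<Longrightarrow> \<bar>\<sigma>1 u - 1\<bar> \<le> CL * r\<^sup>2"
  using abs_sigma1_sub_one_le[of u] mult_left_mono[OF power_mono CL_nonneg, of "\<bar>u\<bar>" r 2] by simp

lemma abs_sigma1_le:
  assumes "\<bar>u\<bar> \<le> r" "r \<le> c"
  shows "\<bar>\<sigma>1 u\<bar> \<le> 1 + CL * c\<^sup>2"
proof -
  have "CL * r\<^sup>2 \<le> CL * c\<^sup>2"
    using assms CL_nonneg by (intro mult_left_mono power_mono) auto
  then show ?thesis using abs_sigma1_sub_one_le_sq[OF assms(1)] by linarith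
qed

lemma abs_sigma_le:
  assumes "\<bar>u\<bar> \<le> r" "r \<le> c"
  shows "\<bar>\<sigma> u\<bar> \<le> (1 + CL * c\<^sup>2) * r"
proof -
  have "CL * r\<^sup>2 * r \<le> CL * c\<^sup>2 * r"
    using assms CL_nonneg by (intro mult_right_mono mult_left_mono power_mono) auto
  then show ?thesis
    using abs_sigma_sub_id_le_cube[OF assms(1)] assms(1)
    by (simp add: algebra_simps power2_eq_square power3_eq_cube)
qed

lemma abs_sigma_mult_sigma_sub_le:
  assumes "\<bar>u\<bar> \<le> r" "\<bar>v\<bar> \<le> r" "r \<le> c"
  shows "\<bar>\<sigma> u * \<sigma> v - u * v\<bar> \<le> CL * (2 + CL * c\<^sup>2) * r ^ 4"
proof -
  have "\<bar>(\<sigma> u - u) * \<sigma> v + u * (\<sigma> v - v)\<bar> \<le> CL * r ^ 3 * ((1 + CL * c\<^sup>2) * r) + r * (CL * r ^ 3)"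
    by (intro abs_add_le_add abs_mult_le_mult abs_sigma_sub_id_le_cube abs_sigma_le assms)
  then show ?thesis by (simp add: algebra_simps power_numeral_reduce)
qed

lemma abs_sigma_mult_sigma1_sub_le:
  assumes "\<bar>u\<bar> \<le> r" "\<bar>v\<bar> \<le> r" "r \<le> c"
  shows "\<bar>\<sigma> u * \<sigma>1 v - u\<bar> \<le> CL * (2 + CL * c\<^sup>2) * r ^ 3"
proof -
  have "\<bar>(\<sigma> u - u) * \<sigma>1 v + u * (\<sigma>1 v - 1)\<bar> \<le> CL * r ^ 3 * (1 + CL * c\<^sup>2) + r * (CL * r\<^sup>2)"
    by (intro abs_add_le_add abs_mult_le_mult abs_sigma_sub_id_le_cube abs_sigma1_le[OF assms(2,3)]
        abs_sigma1_sub_one_le_sq assms)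
  then show ?thesis by (simp add: algebra_simps power_numeral_reduce)
qed

lemma continuous_on_sigma [continuous_intros]:
  "continuous_on S g \<Longrightarrow> continuous_on S (\<lambda>x. \<sigma> (g x))"
  using continuous_on_compose2[of UNIV \<sigma>] s1 DERIV_isCont continuous_at_imp_continuous_on by blast

lemma continuous_on_sigma1 [continuous_intros]:
  "continuous_on S g \<Longrightarrow> continuous_on S (\<lambda>x. \<sigma>1 (g x))"
  using continuous_on_compose2[of UNIV \<sigma>1] s2 DERIV_isCont continuous_at_imp_continuous_on by blast

end

locale isotropic_density =
  fixes \<rho> :: "real^'n \<Rightarrow> real"
  assumes rho_meas: "\<rho> \<in> borel_measurable borel"
    and rho_nonneg: "\<And>x. \<rho> x \<ge> 0"
    and rho_int: "integrable lborel \<rho>"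
    and rho_prob: "integral\<^sup>L lborel \<rho> = 1"
    and rho_cpt: "compact (closure {x. \<rho> x \<noteq> 0})"
    and rho_mom: "\<And>i j. integral\<^sup>L lborel (\<lambda>x. x $ i * x $ j * \<rho> x) = (if i = j then 1 else 0)"
begin

definition supp_bounded :: "(real^'n \<Rightarrow> real) \<Rightarrow> bool" where
  "supp_bounded \<phi> \<longleftrightarrow> \<phi> \<in> borel_measurable borel \<and> bounded (\<phi> ` {x. \<rho> x \<noteq> 0})"

lemma supp_boundedE:
  assumes "supp_bounded \<phi>"
  obtains M where "\<And>x. \<rho> x \<noteq> 0 \<Longrightarrow> \<bar>\<phi> x\<bar> \<le> M"
proof -
  obtain M where "\<forall>y \<in> \<phi> ` {x. \<rho> x \<noteq> 0}. norm y \<le> M"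
    using assms unfolding supp_bounded_def bounded_iff by blast
  then show ?thesis by (intro that) auto
qed

lemma supp_boundedI:
  "\<phi> \<in> borel_measurable borel \<Longrightarrow> (\<And>x. \<rho> x \<noteq> 0 \<Longrightarrow> \<bar>\<phi> x\<bar> \<le> M) \<Longrightarrow> supp_bounded \<phi>"
  by (auto simp: supp_bounded_def bounded_iff)

lemma supp_bounded_continuous: "continuous_on UNIV \<phi> \<Longrightarrow> supp_bounded \<phi>"
  unfolding supp_bounded_def
  by (metis borel_measurable_continuous_onI bounded_subset closure_subset compact_continuous_image
      compact_imp_bounded continuous_on_subset image_mono rho_cpt subset_UNIV)

lemma supp_bounded_add: "supp_bounded \<phi> \<Longrightarrow> supp_bounded \<psi> \<Longrightarrow> supp_bounded (\<lambda>x. \<phi> x + \<psi> x)"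
  by (simp add: supp_bounded_def bounded_plus_comp borel_measurable_add)

lemma supp_bounded_diff: "supp_bounded \<phi> \<Longrightarrow> supp_bounded \<psi> \<Longrightarrow> supp_bounded (\<lambda>x. \<phi> x - \<psi> x)"
  by (simp add: supp_bounded_def bounded_minus_comp borel_measurable_diff)

lemma supp_bounded_mult: "supp_bounded \<phi> \<Longrightarrow> supp_bounded \<psi> \<Longrightarrow> supp_bounded (\<lambda>x. \<phi> x * \<psi> x)"
  by (simp add: supp_bounded_def bounded_mult_comp borel_measurable_times)

lemma supp_bounded_power2: "supp_bounded \<phi> \<Longrightarrow> supp_bounded (\<lambda>x. (\<phi> x)\<^sup>2)"
  unfolding power2_eq_square by (rule supp_bounded_mult)

lemmas supp_bounded_intros =
  supp_bounded_add supp_bounded_diff supp_bounded_mult supp_bounded_power2 supp_bounded_continuous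

lemma abs_mult_density_le: "(\<rho> x \<noteq> 0 \<Longrightarrow> \<bar>e\<bar> \<le> K) \<Longrightarrow> \<bar>e * \<rho> x\<bar> \<le> K * \<rho> x"
  using rho_nonneg[of x] by (cases "\<rho> x = 0") (auto simp: abs_mult intro: mult_right_mono)

lemma integrable_mult_density:
  assumes \<phi>: "supp_bounded \<phi>"
  shows "integrable lborel (\<lambda>x. \<phi> x * \<rho> x)"
proof -
  obtain M where "\<And>x. \<rho> x \<noteq> 0 \<Longrightarrow> \<bar>\<phi> x\<bar> \<le> M" using supp_boundedE[OF \<phi>] by blast
  then have bound: "norm (\<phi> x * \<rho> x) \<le> M * \<rho> x" for x
    using abs_mult_density_le by simp
  show ?thesis
  proof (rule Bochner_Integration.integrable_bound[where f = "\<lambda>x. M * \<rho> x"])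
    show "integrable lborel (\<lambda>x. M * \<rho> x)" using rho_int by simp
    show "(\<lambda>x. \<phi> x * \<rho> x) \<in> borel_measurable lborel"
      using \<phi> rho_meas by (simp add: supp_bounded_def borel_measurable_times)
    show "AE x in lborel. norm (\<phi> x * \<rho> x) \<le> norm (M * \<rho> x)"
      by (intro AE_I2 order_trans[OF bound]) simp
  qed
qed

lemma abs_integral_mult_density_le:
  assumes "supp_bounded \<phi>" "\<And>x. \<rho> x \<noteq> 0 \<Longrightarrow> \<bar>\<phi> x\<bar> \<le> M"
  shows "\<bar>integral\<^sup>L lborel (\<lambda>x. \<phi> x * \<rho> x)\<bar> \<le> M"
proof -
  have "\<bar>integral\<^sup>L lborel (\<lambda>x. \<phi> x * \<rho> x)\<bar> \<le> integral\<^sup>L lborel (\<lambda>x. M * \<rho> x)"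
  proof (rule integral_abs_bound_integral)
    show "integrable lborel (\<lambda>x. \<phi> x * \<rho> x)" using assms(1) by (rule integrable_mult_density)
    show "integrable lborel (\<lambda>x. M * \<rho> x)" using rho_int by simp
    show "\<bar>\<phi> x * \<rho> x\<bar> \<le> M * \<rho> x" for x using assms(2) by (rule abs_mult_density_le)
  qed
  also have "\<dots> = M" using rho_prob by simp
  finally show ?thesis .
qed

lemma supp_norm_bounded: obtains R where "0 \<le> R" "\<And>x. \<rho> x \<noteq> 0 \<Longrightarrow> norm x \<le> R"
proof -
  have "bounded {x. \<rho> x \<noteq> 0}"
    using bounded_subset[OF compact_imp_bounded[OF rho_cpt] closure_subset] .
  then obtain R where "R > 0" "\<forall>x. \<rho> x \<noteq> 0 \<longrightarrow> norm x \<le> R"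
    by (auto simp: bounded_pos)
  then show ?thesis using that[of R] by simp
qed

lemma integral_inner_mult_inner: "integral\<^sup>L lborel (\<lambda>x. (p \<bullet> x) * (v \<bullet> x) * \<rho> x) = p \<bullet> v"
proof -
  have "(p \<bullet> x) * (v \<bullet> x) * \<rho> x = (\<Sum>i\<in>UNIV. \<Sum>j\<in>UNIV. p $ i * v $ j * (x $ i * x $ j * \<rho> x))" for x
  proof -
    have "(p \<bullet> x) * (v \<bullet> x) = (\<Sum>i\<in>UNIV. \<Sum>j\<in>UNIV. (p $ i * x $ i) * (v $ j * x $ j))"
      by (simp only: inner_vec_def inner_real_def sum_product)
    then show ?thesis by (simp add: sum_distrib_left mult_ac)
  qed
  moreover have "integrable lborel (\<lambda>x. x $ i * x $ j * \<rho> x)" for i j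
    by (intro integrable_mult_density supp_bounded_continuous continuous_intros)
  ultimately show ?thesis
    by (simp add: rho_mom inner_vec_def if_distrib cong: if_cong)
qed

lemma deriv_half_integral_sq:
  fixes g E :: "real^'n \<Rightarrow> real" and \<delta> :: "real \<Rightarrow> real^'n \<Rightarrow> real" and K L :: real
  assumes g: "supp_bounded g" and E: "supp_bounded E" and \<delta>: "\<And>t. supp_bounded (\<delta> t)"
    and first_order: "\<And>t x. \<bar>t\<bar> \<le> 1 \<Longrightarrow> \<rho> x \<noteq> 0 \<Longrightarrow> \<bar>\<delta> t x - t * E x\<bar> \<le> K * t\<^sup>2"
    and lipschitz: "\<And>t x. \<bar>t\<bar> \<le> 1 \<Longrightarrow> \<rho> x \<noteq> 0 \<Longrightarrow> \<bar>\<delta> t x\<bar> \<le> L * \<bar>t\<bar>"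
  shows "deriv (\<lambda>t. 1/2 * integral\<^sup>L lborel (\<lambda>x. (g x + \<delta> t x)\<^sup>2 * \<rho> x)) 0
       = integral\<^sup>L lborel (\<lambda>x. g x * E x * \<rho> x)"
proof -
  obtain G where G: "\<And>x. \<rho> x \<noteq> 0 \<Longrightarrow> \<bar>g x\<bar> \<le> G" using supp_boundedE[OF g] by blast
  define F where "F = (\<lambda>t x. (1/2 * (g x + \<delta> t x)\<^sup>2) * \<rho> x)"
  have F_eq: "(\<lambda>t. integral\<^sup>L lborel (F t))
      = (\<lambda>t. 1/2 * integral\<^sup>L lborel (\<lambda>x. (g x + \<delta> t x)\<^sup>2 * \<rho> x))"
    by (simp add: F_def mult.assoc)
  show ?thesis unfolding F_eq[symmetric]
  proof (rule deriv_integral_at_0)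
    show "integrable lborel (F t)" for t
      unfolding F_def by (intro integrable_mult_density supp_bounded_intros g \<delta> continuous_intros)
    show "integrable lborel (\<lambda>x. g x * E x * \<rho> x)"
      by (intro integrable_mult_density supp_bounded_intros g E)
    fix t :: real and x assume t: "\<bar>t\<bar> \<le> 1"
    have "\<bar>(g x * (\<delta> t x - t * E x) + 1/2 * (\<delta> t x)\<^sup>2) * \<rho> x\<bar> \<le> (G * K + 1/2 * L\<^sup>2) * t\<^sup>2 * \<rho> x"
    proof (rule abs_mult_density_le)
      assume x: "\<rho> x \<noteq> 0"
      have "\<bar>g x * (\<delta> t x - t * E x) + 1/2 * (\<delta> t x)\<^sup>2\<bar> \<le> G * (K * t\<^sup>2) + 1/2 * (L * \<bar>t\<bar>)\<^sup>2"
        using power_mono[OF lipschitz[OF t x] abs_ge_zero, of 2]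
        by (intro abs_add_le_add abs_mult_le_mult G x first_order t) auto
      also have "\<dots> = (G * K + 1/2 * L\<^sup>2) * t\<^sup>2"
        by (simp add: power_mult_distrib algebra_simps)
      finally show "\<bar>g x * (\<delta> t x - t * E x) + 1/2 * (\<delta> t x)\<^sup>2\<bar> \<le> (G * K + 1/2 * L\<^sup>2) * t\<^sup>2" .
    qed
    moreover have "\<delta> 0 x = 0" if "\<rho> x \<noteq> 0"
      using lipschitz[of 0 x] that by simp
    ultimately show "\<bar>F t x - F 0 x - t * (g x * E x * \<rho> x)\<bar> \<le> (G * K + 1/2 * L\<^sup>2) * t\<^sup>2 * \<rho> x"
      unfolding F_def by (cases "\<rho> x = 0") (simp_all add: algebra_simps power2_eq_square)
  qed (rule rho_int)
qed

end

lemma fnet_update_a: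
  assumes "k < m"
  shows "fnet \<sigma> m (a(k := a k + t)) w x = fnet \<sigma> m a w x + t * \<sigma> (w k \<bullet> x)"
proof -
  have "fnet \<sigma> m (a(k := a k + t)) w x
      = (\<Sum>l<m. a l * \<sigma> (w l \<bullet> x) + (if l = k then t * \<sigma> (w k \<bullet> x) else 0))"
    unfolding fnet_def by (rule sum.cong) (simp_all add: distrib_right)
  then show ?thesis
    using assms by (simp add: fnet_def sum.distrib)
qed

lemma fnet_update_w:
  assumes "k < m"
  shows "fnet \<sigma> m a (w(k := w k + t *\<^sub>R axis i 1)) x
       = fnet \<sigma> m a w x + a k * (\<sigma> (w k \<bullet> x + t * x $ i) - \<sigma> (w k \<bullet> x))"
proof -
  have "fnet \<sigma> m a (w(k := w k + t *\<^sub>R axis i 1)) x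
      = (\<Sum>l<m. a l * \<sigma> (w l \<bullet> x)
          + (if l = k then a k * (\<sigma> (w k \<bullet> x + t * x $ i) - \<sigma> (w k \<bullet> x)) else 0))"
  proof (unfold fnet_def, rule sum.cong)
    show "a l * \<sigma> ((w(k := w k + t *\<^sub>R axis i 1)) l \<bullet> x) = a l * \<sigma> (w l \<bullet> x)
        + (if l = k then a k * (\<sigma> (w k \<bullet> x + t * x $ i) - \<sigma> (w k \<bullet> x)) else 0)" for l
      by (cases "l = k") (simp_all add: inner_add_left inner_axis' right_diff_distrib)
  qed simp
  then show ?thesis
    using assms by (simp add: fnet_def sum.distrib)
qed

lemma abs_le_qmax:
  assumes "k < m"
  shows "\<bar>a k\<bar> \<le> qmax m a w" "\<bar>w k $ i\<bar> \<le> qmax m a w"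
  using assms unfolding qmax_def by (auto intro!: Max_ge)

lemma abs_inner_le_qmax:
  fixes w :: "nat \<Rightarrow> real^'n"
  assumes "l < m" "norm x \<le> R"
  shows "\<bar>w l \<bullet> x\<bar> \<le> real CARD('n) * R * qmax m a w"
proof -
  have "norm (w l) \<le> real CARD('n) * qmax m a w"
    using norm_le_l1_cart[of "w l"] abs_le_qmax(2)[OF assms(1), where a = a and w = w]
      sum_bounded_above[of UNIV "\<lambda>i. \<bar>w l $ i\<bar>" "qmax m a w"]
    by simp
  moreover have "0 \<le> qmax m a w"
    using abs_le_qmax(1)[OF assms(1), where a = a and w = w] abs_ge_zero[of "a l"] by linarith
  ultimately have "norm (w l) * norm x \<le> real CARD('n) * qmax m a w * R"
    using assms(2) by (intro mult_mono) auto
  then show ?thesis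
    using Cauchy_Schwarz_ineq2[of "w l" x] by (simp add: mult_ac)
qed

locale two_layer_network = activation \<sigma> \<sigma>1 \<sigma>2 \<sigma>3 CL + isotropic_density \<rho>
  for \<sigma> \<sigma>1 \<sigma>2 \<sigma>3 :: "real \<Rightarrow> real" and CL :: real and \<rho> :: "real^'n \<Rightarrow> real" +
  fixes f :: "real^'n \<Rightarrow> real" and j1 :: 'n
  assumes f_meas: "f \<in> borel_measurable borel"
    and f_bdd: "\<exists>B. \<forall>x\<in>closure {x. \<rho> x \<noteq> 0}. \<bar>f x\<bar> \<le> B"
    and f_corr: "integral\<^sup>L lborel (\<lambda>x. (f x * \<rho> x) *\<^sub>R x) = axis j1 1"
begin

lemma f_bound: obtains B where "0 \<le> B" "\<And>x. \<rho> x \<noteq> 0 \<Longrightarrow> \<bar>f x\<bar> \<le> B"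
proof -
  obtain B where "\<forall>x\<in>closure {x. \<rho> x \<noteq> 0}. \<bar>f x\<bar> \<le> B" using f_bdd ..
  then have "\<And>x. \<rho> x \<noteq> 0 \<Longrightarrow> \<bar>f x\<bar> \<le> B"
    using closure_subset[of "{x. \<rho> x \<noteq> 0}"] by auto
  then show ?thesis by (intro that[of "max B 0"]) (auto simp: le_max_iff_disj)
qed

lemma supp_bounded_f: "supp_bounded f"
proof -
  obtain B where "0 \<le> B" "\<And>x. \<rho> x \<noteq> 0 \<Longrightarrow> \<bar>f x\<bar> \<le> B" using f_bound by blast
  with f_meas show ?thesis by (intro supp_boundedI)
qed

lemma supp_bounded_fnet: "supp_bounded (fnet \<sigma> m a w)"
  unfolding fnet_def by (intro supp_bounded_continuous continuous_intros)

lemma supp_bounded_residual: "supp_bounded (\<lambda>x. fnet \<sigma> m a w x - f x)"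
  by (intro supp_bounded_diff supp_bounded_fnet supp_bounded_f)

lemma integral_f_mult_inner: "integral\<^sup>L lborel (\<lambda>x. f x * (p \<bullet> x) * \<rho> x) = p $ j1"
proof -
  obtain B where B: "0 \<le> B" "\<And>x. \<rho> x \<noteq> 0 \<Longrightarrow> \<bar>f x\<bar> \<le> B" by (rule f_bound) blast
  obtain R where R: "0 \<le> R" "\<And>x. \<rho> x \<noteq> 0 \<Longrightarrow> norm x \<le> R" by (rule supp_norm_bounded) blast
  have bound: "norm ((f x * \<rho> x) *\<^sub>R x) \<le> B * R * \<rho> x" for x
  proof (cases "\<rho> x = 0")
    case False
    have "\<bar>f x\<bar> * norm x \<le> B * R"
      using B(1) B(2)[OF False] R(2)[OF False] by (intro mult_mono) auto
    from mult_right_mono[OF this rho_nonneg[of x]] show ?thesis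
      using rho_nonneg[of x] by (simp add: abs_mult mult_ac)
  qed simp
  have "integrable lborel (\<lambda>x. (f x * \<rho> x) *\<^sub>R x)"
  proof (rule Bochner_Integration.integrable_bound[where f = "\<lambda>x. B * R * \<rho> x"])
    show "integrable lborel (\<lambda>x. B * R * \<rho> x)" using rho_int by simp
    show "(\<lambda>x. (f x * \<rho> x) *\<^sub>R x) \<in> borel_measurable lborel" using f_meas rho_meas by simp
    show "AE x in lborel. norm ((f x * \<rho> x) *\<^sub>R x) \<le> norm (B * R * \<rho> x)"
      by (intro AE_I2 order_trans[OF bound]) simp
  qed
  have "integral\<^sup>L lborel (\<lambda>x. f x * (p \<bullet> x) * \<rho> x)
      = integral\<^sup>L lborel (\<lambda>x. p \<bullet> ((f x * \<rho> x) *\<^sub>R x))"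
    by (rule Bochner_Integration.integral_cong) (simp_all add: mult_ac)
  also have "\<dots> = p \<bullet> integral\<^sup>L lborel (\<lambda>x. (f x * \<rho> x) *\<^sub>R x)"
    using \<open>integrable lborel (\<lambda>x. (f x * \<rho> x) *\<^sub>R x)\<close> by (intro integral_inner_right)
  also have "\<dots> = p $ j1"
    by (simp add: f_corr inner_axis)
  finally show ?thesis .
qed

lemma dR_a_eq:
  assumes k: "k < m"
  shows "dR_a \<sigma> \<rho> f m a w k
       = integral\<^sup>L lborel (\<lambda>x. (fnet \<sigma> m a w x - f x) * \<sigma> (w k \<bullet> x) * \<rho> x)"
proof -
  have \<sigma>k: "supp_bounded (\<lambda>x. \<sigma> (w k \<bullet> x))"
    by (intro supp_bounded_continuous continuous_intros)
  then obtain M where M: "\<And>x. \<rho> x \<noteq> 0 \<Longrightarrow> \<bar>\<sigma> (w k \<bullet> x)\<bar> \<le> M"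
    using supp_boundedE by blast
  have "dR_a \<sigma> \<rho> f m a w k = deriv (\<lambda>t. 1/2 * integral\<^sup>L lborel
      (\<lambda>x. ((fnet \<sigma> m a w x - f x) + t * \<sigma> (w k \<bullet> x))\<^sup>2 * \<rho> x)) 0"
    unfolding dR_a_def risk_def fnet_update_a[OF k] by (simp add: diff_add_eq)
  also have "\<dots> = integral\<^sup>L lborel (\<lambda>x. (fnet \<sigma> m a w x - f x) * \<sigma> (w k \<bullet> x) * \<rho> x)"
  proof (rule deriv_half_integral_sq[where K = 0 and L = M])
    show "\<bar>t * \<sigma> (w k \<bullet> x)\<bar> \<le> M * \<bar>t\<bar>" if "\<rho> x \<noteq> 0" for t x
      using abs_mult_le_mult[OF order_refl M[OF that], of t] by (simp add: mult.commute)
    show "supp_bounded (\<lambda>x. t * \<sigma> (w k \<bullet> x))" for t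
      by (intro supp_bounded_continuous continuous_intros)
  qed (simp_all add: supp_bounded_residual \<sigma>k)
  finally show ?thesis .
qed

lemma dR_w_eq:
  assumes k: "k < m"
  shows "dR_w \<sigma> \<rho> f m a w k $ i
       = integral\<^sup>L lborel (\<lambda>x. (fnet \<sigma> m a w x - f x) * (a k * \<sigma>1 (w k \<bullet> x) * x $ i) * \<rho> x)"
proof -
  have "supp_bounded (\<lambda>x. w k \<bullet> x)"
    by (intro supp_bounded_continuous continuous_intros)
  then obtain U where U: "\<And>x. \<rho> x \<noteq> 0 \<Longrightarrow> \<bar>w k \<bullet> x\<bar> \<le> U"
    using supp_boundedE by blast
  obtain R where R: "0 \<le> R" "\<And>x. \<rho> x \<noteq> 0 \<Longrightarrow> norm x \<le> R"
    by (rule supp_norm_bounded) blast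
  have "dR_w \<sigma> \<rho> f m a w k $ i = deriv (\<lambda>t. 1/2 * integral\<^sup>L lborel (\<lambda>x.
      ((fnet \<sigma> m a w x - f x) + a k * (\<sigma> (w k \<bullet> x + t * x $ i) - \<sigma> (w k \<bullet> x)))\<^sup>2 * \<rho> x)) 0"
    unfolding dR_w_def risk_def fnet_update_w[OF k] by (simp add: diff_add_eq)
  also have "\<dots> = integral\<^sup>L lborel
      (\<lambda>x. (fnet \<sigma> m a w x - f x) * (a k * \<sigma>1 (w k \<bullet> x) * x $ i) * \<rho> x)"
  proof (rule deriv_half_integral_sq[where K = "\<bar>a k\<bar> * (CL * (U + R) * R\<^sup>2)"
        and L = "\<bar>a k\<bar> * ((1 + CL * (U + R)\<^sup>2) * R)"])
    show "supp_bounded (\<lambda>x. a k * (\<sigma> (w k \<bullet> x + t * x $ i) - \<sigma> (w k \<bullet> x)))" for t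
      by (intro supp_bounded_continuous continuous_intros)
    show "supp_bounded (\<lambda>x. a k * \<sigma>1 (w k \<bullet> x) * x $ i)"
      by (intro supp_bounded_continuous continuous_intros)
  next
    fix t :: real and x assume t: "\<bar>t\<bar> \<le> 1" and x: "\<rho> x \<noteq> 0"
    have xi: "\<bar>x $ i\<bar> \<le> R"
      using R(2)[OF x] component_le_norm_cart[of x i] by linarith
    from abs_mult_le_mult[OF order_refl abs_sigma_scaled_increment_le(1)[OF U[OF x] xi t], of "a k"]
    show "\<bar>a k * (\<sigma> (w k \<bullet> x + t * x $ i) - \<sigma> (w k \<bullet> x)) - t * (a k * \<sigma>1 (w k \<bullet> x) * x $ i)\<bar>
        \<le> \<bar>a k\<bar> * (CL * (U + R) * R\<^sup>2) * t\<^sup>2"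
      by (simp add: algebra_simps)
    from abs_mult_le_mult[OF order_refl abs_sigma_scaled_increment_le(2)[OF U[OF x] xi t], of "a k"]
    show "\<bar>a k * (\<sigma> (w k \<bullet> x + t * x $ i) - \<sigma> (w k \<bullet> x))\<bar>
        \<le> \<bar>a k\<bar> * ((1 + CL * (U + R)\<^sup>2) * R) * \<bar>t\<bar>"
      by (simp add: mult_ac)
  qed (rule supp_bounded_residual)
  finally show ?thesis .
qed

lemma hot_f_eq:
  assumes k: "k < m"
  shows "hot_f \<sigma> \<rho> f j1 m a w k = integral\<^sup>L lborel (\<lambda>x.
     (f x * (\<sigma> (w k \<bullet> x) - w k \<bullet> x)
      - (\<Sum>l<m. a l * (\<sigma> (w l \<bullet> x) * \<sigma> (w k \<bullet> x) - (w l \<bullet> x) * (w k \<bullet> x)))) * \<rho> x)"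
proof -
  define P where "P = (\<Sum>l<m. a l *\<^sub>R w l)"
  have "hot_f \<sigma> \<rho> f j1 m a w k
      = integral\<^sup>L lborel (\<lambda>x. (P \<bullet> x) * (w k \<bullet> x) * \<rho> x)
        - integral\<^sup>L lborel (\<lambda>x. (fnet \<sigma> m a w x - f x) * \<sigma> (w k \<bullet> x) * \<rho> x)
        - integral\<^sup>L lborel (\<lambda>x. f x * (w k \<bullet> x) * \<rho> x)"
    unfolding integral_inner_mult_inner integral_f_mult_inner hot_f_def dR_a_eq[OF k]
    by (simp add: P_def inner_vec_def inner_real_def)
  also have "\<dots> = integral\<^sup>L lborel (\<lambda>x. (P \<bullet> x) * (w k \<bullet> x) * \<rho> x
      - (fnet \<sigma> m a w x - f x) * \<sigma> (w k \<bullet> x) * \<rho> x - f x * (w k \<bullet> x) * \<rho> x)"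
  proof -
    have "integrable lborel (\<lambda>x. (P \<bullet> x) * (w k \<bullet> x) * \<rho> x)"
      by (intro integrable_mult_density supp_bounded_continuous continuous_intros)
    moreover have "integrable lborel (\<lambda>x. (fnet \<sigma> m a w x - f x) * \<sigma> (w k \<bullet> x) * \<rho> x)"
      by (intro integrable_mult_density supp_bounded_mult supp_bounded_residual
          supp_bounded_continuous continuous_intros)
    moreover have "integrable lborel (\<lambda>x. f x * (w k \<bullet> x) * \<rho> x)"
      by (intro integrable_mult_density supp_bounded_mult supp_bounded_f
          supp_bounded_continuous continuous_intros)
    ultimately show ?thesis by simp
  qed
  also have "\<dots> = integral\<^sup>L lborel (\<lambda>x.
     (f x * (\<sigma> (w k \<bullet> x) - w k \<bullet> x)
      - (\<Sum>l<m. a l * (\<sigma> (w l \<bullet> x) * \<sigma> (w k \<bullet> x) - (w l \<bullet> x) * (w k \<bullet> x)))) * \<rho> x)"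
    by (rule Bochner_Integration.integral_cong)
      (simp_all add: P_def fnet_def inner_sum_left sum_distrib_left sum_distrib_right sum_subtractf algebra_simps)
  finally show ?thesis .
qed

lemma hot_g_component_eq:
  assumes k: "k < m"
  shows "hot_g \<sigma> \<rho> f j1 m a w k $ i = integral\<^sup>L lborel (\<lambda>x.
     a k * (f x * x $ i * (\<sigma>1 (w k \<bullet> x) - 1)
      - (\<Sum>l<m. a l * (\<sigma> (w l \<bullet> x) * \<sigma>1 (w k \<bullet> x) - w l \<bullet> x) * x $ i)) * \<rho> x)"
proof -
  define P where "P = (\<Sum>l<m. a l *\<^sub>R w l)"
  have "axis i 1 $ j1 = axis j1 (1::real) $ i"
    by (simp add: axis_def)
  with integral_f_mult_inner[of "axis i 1"]
  have f_moment: "integral\<^sup>L lborel (\<lambda>x. f x * x $ i * \<rho> x) = axis j1 1 $ i"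
    by (simp add: inner_axis')
  have P_moment: "integral\<^sup>L lborel (\<lambda>x. (P \<bullet> x) * x $ i * \<rho> x) = P $ i"
    using integral_inner_mult_inner[of P "axis i 1"] by (simp add: inner_axis inner_axis')
  have "hot_g \<sigma> \<rho> f j1 m a w k $ i
      = a k * integral\<^sup>L lborel (\<lambda>x. (P \<bullet> x) * x $ i * \<rho> x)
        - integral\<^sup>L lborel (\<lambda>x. (fnet \<sigma> m a w x - f x) * (a k * \<sigma>1 (w k \<bullet> x) * x $ i) * \<rho> x)
        - a k * integral\<^sup>L lborel (\<lambda>x. f x * x $ i * \<rho> x)"
    unfolding f_moment P_moment by (simp add: hot_g_def dR_w_eq[OF k] P_def algebra_simps)
  also have "\<dots> = integral\<^sup>L lborel (\<lambda>x. a k * ((P \<bullet> x) * x $ i * \<rho> x)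
      - (fnet \<sigma> m a w x - f x) * (a k * \<sigma>1 (w k \<bullet> x) * x $ i) * \<rho> x
      - a k * (f x * x $ i * \<rho> x))"
  proof -
    have "integrable lborel (\<lambda>x. (P \<bullet> x) * x $ i * \<rho> x)"
      by (intro integrable_mult_density supp_bounded_continuous continuous_intros)
    moreover have "integrable lborel
        (\<lambda>x. (fnet \<sigma> m a w x - f x) * (a k * \<sigma>1 (w k \<bullet> x) * x $ i) * \<rho> x)"
      by (intro integrable_mult_density supp_bounded_mult supp_bounded_residual
          supp_bounded_continuous continuous_intros)
    moreover have "integrable lborel (\<lambda>x. f x * x $ i * \<rho> x)"
      by (intro integrable_mult_density supp_bounded_mult supp_bounded_f
          supp_bounded_continuous continuous_intros)
    ultimately show ?thesis by simp
  qed
  also have "\<dots> = integral\<^sup>L lborel (\<lambda>x.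
     a k * (f x * x $ i * (\<sigma>1 (w k \<bullet> x) - 1)
      - (\<Sum>l<m. a l * (\<sigma> (w l \<bullet> x) * \<sigma>1 (w k \<bullet> x) - w l \<bullet> x) * x $ i)) * \<rho> x)"
    by (rule Bochner_Integration.integral_cong)
      (simp_all add: P_def fnet_def inner_sum_left sum_distrib_left sum_distrib_right sum_subtractf
        algebra_simps)
  finally show ?thesis .
qed

lemma abs_hot_f_le:
  assumes k: "k < m" and c: "0 \<le> c" and q: "q \<le> 1"
    and a_le: "\<And>l. l < m \<Longrightarrow> \<bar>a l\<bar> \<le> q"
    and inner_le: "\<And>l x. l < m \<Longrightarrow> \<rho> x \<noteq> 0 \<Longrightarrow> \<bar>w l \<bullet> x\<bar> \<le> c * q"
    and f_le: "\<And>x. \<rho> x \<noteq> 0 \<Longrightarrow> \<bar>f x\<bar> \<le> B"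
  shows "\<bar>hot_f \<sigma> \<rho> f j1 m a w k\<bar>
    \<le> B * CL * c ^ 3 * q ^ 3 + CL * (2 + CL * c\<^sup>2) * c ^ 4 * (real m * q ^ 5)"
  unfolding hot_f_eq[OF k]
proof (rule abs_integral_mult_density_le, goal_cases integrand bound)
  case integrand
  show ?case
    by (intro supp_bounded_diff supp_bounded_mult supp_bounded_f supp_bounded_continuous
        continuous_intros)
next
  case (bound x)
  have cq: "c * q \<le> c"
    using a_le[OF k] c q by (auto intro: mult_left_le)
  have "\<bar>f x * (\<sigma> (w k \<bullet> x) - w k \<bullet> x)\<bar> \<le> B * (CL * (c * q) ^ 3)"
    by (intro abs_mult_le_mult f_le abs_sigma_sub_id_le_cube inner_le k bound)
  moreover have "\<bar>\<Sum>l<m. a l * (\<sigma> (w l \<bullet> x) * \<sigma> (w k \<bullet> x) - (w l \<bullet> x) * (w k \<bullet> x))\<bar>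
      \<le> real m * (q * (CL * (2 + CL * c\<^sup>2) * (c * q) ^ 4))"
    by (intro abs_sum_lessThan_le abs_mult_le_mult a_le abs_sigma_mult_sigma_sub_le inner_le cq k bound)
  ultimately show ?case
    by (rule order_trans[OF abs_diff_le_add]) (simp add: power_mult_distrib power_numeral_reduce mult_ac)
qed

lemma abs_hot_g_component_le:
  assumes k: "k < m" and c: "0 \<le> c" and q: "q \<le> 1"
    and a_le: "\<And>l. l < m \<Longrightarrow> \<bar>a l\<bar> \<le> q"
    and inner_le: "\<And>l x. l < m \<Longrightarrow> \<rho> x \<noteq> 0 \<Longrightarrow> \<bar>w l \<bullet> x\<bar> \<le> c * q"
    and f_le: "\<And>x. \<rho> x \<noteq> 0 \<Longrightarrow> \<bar>f x\<bar> \<le> B"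
    and x_le: "\<And>x. \<rho> x \<noteq> 0 \<Longrightarrow> norm x \<le> R"
  shows "\<bar>hot_g \<sigma> \<rho> f j1 m a w k $ i\<bar>
    \<le> B * R * CL * c\<^sup>2 * q ^ 3 + R * CL * (2 + CL * c\<^sup>2) * c ^ 3 * (real m * q ^ 5)"
  unfolding hot_g_component_eq[OF k]
proof (rule abs_integral_mult_density_le, goal_cases integrand bound)
  case integrand
  show ?case
    by (intro supp_bounded_mult supp_bounded_diff supp_bounded_f supp_bounded_continuous
        continuous_intros)
next
  case (bound x)
  have cq: "c * q \<le> c"
    using a_le[OF k] c q by (auto intro: mult_left_le)
  have xi: "\<bar>x $ i\<bar> \<le> R"
    using x_le[OF bound] component_le_norm_cart[of x i] by linarith
  have "\<bar>f x * x $ i * (\<sigma>1 (w k \<bullet> x) - 1)\<bar> \<le> B * R * (CL * (c * q)\<^sup>2)"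
    by (intro abs_mult_le_mult f_le xi abs_sigma1_sub_one_le_sq inner_le k bound)
  moreover have "\<bar>\<Sum>l<m. a l * (\<sigma> (w l \<bullet> x) * \<sigma>1 (w k \<bullet> x) - w l \<bullet> x) * x $ i\<bar>
      \<le> real m * (q * (CL * (2 + CL * c\<^sup>2) * (c * q) ^ 3) * R)"
    by (intro abs_sum_lessThan_le abs_mult_le_mult a_le abs_sigma_mult_sigma1_sub_le inner_le cq k
        bound xi)
  ultimately show ?case
    by (rule order_trans[OF abs_mult_le_mult[OF a_le[OF k] abs_diff_le_add]])
      (simp add: power_mult_distrib power_numeral_reduce algebra_simps)
qed

lemma norm_hot_g_le:
  assumes "k < m" "0 \<le> c" "q \<le> 1"
    and "\<And>l. l < m \<Longrightarrow> \<bar>a l\<bar> \<le> q"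
    and "\<And>l x. l < m \<Longrightarrow> \<rho> x \<noteq> 0 \<Longrightarrow> \<bar>w l \<bullet> x\<bar> \<le> c * q"
    and "\<And>x. \<rho> x \<noteq> 0 \<Longrightarrow> \<bar>f x\<bar> \<le> B"
    and "\<And>x. \<rho> x \<noteq> 0 \<Longrightarrow> norm x \<le> R"
  shows "norm (hot_g \<sigma> \<rho> f j1 m a w k) \<le> real CARD('n) * B * R * CL * c\<^sup>2 * q ^ 3
    + real CARD('n) * R * CL * (2 + CL * c\<^sup>2) * c ^ 3 * (real m * q ^ 5)"
proof -
  have "norm (hot_g \<sigma> \<rho> f j1 m a w k) \<le> (\<Sum>i\<in>UNIV. \<bar>hot_g \<sigma> \<rho> f j1 m a w k $ i\<bar>)"
    by (rule norm_le_l1_cart)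
  also have "\<dots> \<le> real CARD('n)
      * (B * R * CL * c\<^sup>2 * q ^ 3 + R * CL * (2 + CL * c\<^sup>2) * c ^ 3 * (real m * q ^ 5))"
    using sum_bounded_above[OF abs_hot_g_component_le[OF assms]] by simp
  finally show ?thesis
    by (simp add: algebra_simps)
qed

lemma higher_order_terms_bound:
  "\<exists>C>0. \<forall>m\<ge>1. \<forall>(a::nat \<Rightarrow> real) (w::nat \<Rightarrow> real^'n).
     qmax m a w \<le> 1 \<longrightarrow>
     (\<forall>k<m. \<bar>hot_f \<sigma> \<rho> f j1 m a w k\<bar> \<le> C * (qmax m a w ^ 3 + real m * qmax m a w ^ 5)
          \<and> norm (hot_g \<sigma> \<rho> f j1 m a w k) \<le> C * (qmax m a w ^ 3 + real m * qmax m a w ^ 5))"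
proof -
  obtain B where B: "0 \<le> B" "\<And>x. \<rho> x \<noteq> 0 \<Longrightarrow> \<bar>f x\<bar> \<le> B"
    by (rule f_bound) blast
  obtain R where R: "0 \<le> R" "\<And>x. \<rho> x \<noteq> 0 \<Longrightarrow> norm x \<le> R"
    by (rule supp_norm_bounded) blast
  define c where "c = real CARD('n) * R"
  define C where "C = 1 + B * CL * c ^ 3 + CL * (2 + CL * c\<^sup>2) * c ^ 4
    + real CARD('n) * B * R * CL * c\<^sup>2 + real CARD('n) * R * CL * (2 + CL * c\<^sup>2) * c ^ 3"
  have c: "0 \<le> c" using R(1) by (simp add: c_def)
  have "0 \<le> B * CL * c ^ 3" "0 \<le> CL * (2 + CL * c\<^sup>2) * c ^ 4"
    "0 \<le> real CARD('n) * B * R * CL * c\<^sup>2" "0 \<le> real CARD('n) * R * CL * (2 + CL * c\<^sup>2) * c ^ 3"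
    using B(1) R(1) c CL_nonneg by simp_all
  then have C: "0 < C" "B * CL * c ^ 3 \<le> C" "CL * (2 + CL * c\<^sup>2) * c ^ 4 \<le> C"
    "real CARD('n) * B * R * CL * c\<^sup>2 \<le> C" "real CARD('n) * R * CL * (2 + CL * c\<^sup>2) * c ^ 3 \<le> C"
    unfolding C_def by linarith+
  show ?thesis
  proof (intro exI[of _ C] conjI allI impI C(1))
    fix m k :: nat and a :: "nat \<Rightarrow> real" and w :: "nat \<Rightarrow> real^'n"
    assume q: "qmax m a w \<le> 1" and k: "k < m"
    let ?q = "qmax m a w"
    have a_le: "\<bar>a l\<bar> \<le> ?q" if "l < m" for l
      using abs_le_qmax(1)[OF that] .
    have inner_le: "\<bar>w l \<bullet> x\<bar> \<le> c * ?q" if "l < m" "\<rho> x \<noteq> 0" for l x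
      using abs_inner_le_qmax[OF that(1) R(2)[OF that(2)]] by (simp add: c_def)
    have powers: "0 \<le> ?q ^ 3" "0 \<le> real m * ?q ^ 5"
      using a_le[OF k] by simp_all
    have "\<bar>hot_f \<sigma> \<rho> f j1 m a w k\<bar>
        \<le> B * CL * c ^ 3 * ?q ^ 3 + CL * (2 + CL * c\<^sup>2) * c ^ 4 * (real m * ?q ^ 5)"
      by (rule abs_hot_f_le[OF k c q a_le inner_le B(2)])
    also have "\<dots> \<le> C * (?q ^ 3 + real m * ?q ^ 5)"
      by (rule mult_add_mult_le[OF C(2,3) powers])
    finally show "\<bar>hot_f \<sigma> \<rho> f j1 m a w k\<bar> \<le> C * (?q ^ 3 + real m * ?q ^ 5)" .
    have "norm (hot_g \<sigma> \<rho> f j1 m a w k)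
        \<le> real CARD('n) * B * R * CL * c\<^sup>2 * ?q ^ 3
          + real CARD('n) * R * CL * (2 + CL * c\<^sup>2) * c ^ 3 * (real m * ?q ^ 5)"
      by (rule norm_hot_g_le[OF k c q a_le inner_le B(2) R(2)])
    also have "\<dots> \<le> C * (?q ^ 3 + real m * ?q ^ 5)"
      by (rule mult_add_mult_le[OF C(4,5) powers])
    finally show "norm (hot_g \<sigma> \<rho> f j1 m a w k) \<le> C * (?q ^ 3 + real m * ?q ^ 5)" .
  qed
qed

end

theorem lemma1:
  fixes \<rho> f :: "real^'n \<Rightarrow> real" and j1 :: 'n
    and \<sigma> \<sigma>1 \<sigma>2 \<sigma>3 :: "real \<Rightarrow> real" and CL :: real
  assumes rho_meas: "\<rho> \<in> borel_measurable borel"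
    and rho_nonneg: "\<And>x. \<rho> x \<ge> 0"
    and rho_int: "integrable lborel \<rho>"
    and rho_prob: "integral\<^sup>L lborel \<rho> = 1"
    and rho_cpt: "compact (closure {x. \<rho> x \<noteq> 0})"
    and rho_mom: "\<And>i j. integral\<^sup>L lborel (\<lambda>x. x $ i * x $ j * \<rho> x) = (if i = j then 1 else 0)"
    and f_meas: "f \<in> borel_measurable borel"
    and f_bdd: "\<exists>B. \<forall>x\<in>closure {x. \<rho> x \<noteq> 0}. \<bar>f x\<bar> \<le> B"
    and f_corr: "integral\<^sup>L lborel (\<lambda>x. (f x * \<rho> x) *\<^sub>R x) = axis j1 1"
    and s1: "\<And>z. (\<sigma> has_real_derivative \<sigma>1 z) (at z)"
    and s2: "\<And>z. (\<sigma>1 has_real_derivative \<sigma>2 z) (at z)"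
    and s3: "\<And>z. (\<sigma>2 has_real_derivative \<sigma>3 z) (at z)"
    and s0: "\<sigma> 0 = 0" "\<sigma>1 0 = 1" "\<sigma>2 0 = 0"
    and sL: "\<And>z. \<bar>\<sigma>3 z\<bar> \<le> CL"
  shows "\<exists>C>0. \<forall>m\<ge>1. \<forall>(a::nat \<Rightarrow> real) (w::nat \<Rightarrow> real^'n).
           qmax m a w \<le> 1 \<longrightarrow>
           (\<forall>k<m. \<bar>hot_f \<sigma> \<rho> f j1 m a w k\<bar> \<le> C * (qmax m a w ^ 3 + real m * qmax m a w ^ 5)
                \<and> norm (hot_g \<sigma> \<rho> f j1 m a w k) \<le> C * (qmax m a w ^ 3 + real m * qmax m a w ^ 5))"
proof -
  interpret two_layer_network \<sigma> \<sigma>1 \<sigma>2 \<sigma>3 CL \<rho> f j1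
    by unfold_locales (fact assms)+
  show ?thesis
    by (rule higher_order_terms_bound)
qed

end
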